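(* For every $m \in \mathbb{N}$, the $m$-uniform hypergraph $\mathcal{H}_m = (V, \mathcal{E}_s \cup \mathcal{E}_p)$ defined below admits a realization with bottomless rectangles and horizontal strips: there is an injective map $\pi\colon V \to \mathbb{R}^2$ such that for every hyperedge $E$ of $\mathcal{H}_m$ there is a range $R \in \mathcal{R}_{\rm BL} \cup \mathcal{R}_{\rm HS}$ with $\pi(V) \cap R = \pi(E)$.
   Context: Construction of $\mathcal{H}_m$: first a rooted forest $F_m$ with $m^m$ trees is built, whose vertices are partitioned into "stages"; each stage $S$ carries a total order $<_S$, and all vertices of a stage have the same distance $j$ (the level of $S$) to the root of their tree; a stage on level $j \in \{0,\dots,m-1\}$ has $m^{m-j}$ vertices. Start with $m^m$ roots, which form the unique stage on level $0$, ordered in an arbitrary fixed way. Then, for every already defined stage $S$ on level $j < m-1$ and every subset $S' \subseteq S$ with $|S'| = m^{m-j-1}$, add a new stage $T(S')$ on level $j+1$ consisting of $m^{m-j-1}$ new vertices such that every vertex of $S'$ gets exactly one child from $T(S')$, and order $T(S')$ by $<_{T(S')}$ as their parents are ordered by $<_S$. $\mathcal{H}_m$ has vertex set $V = V(F_m)$; its hyperedges are the stage-hyperedges $\mathcal{E}_s$ (for every stage $S$, each set of $m$ consecutive vertices in $<_S$) and the path-hyperedges $\mathcal{E}_p$ (the vertex set of every root-to-leaf path in $F_m$). Bottomless rectangles: $\mathcal{R}_{\rm BL} = \{\{(x,y) : a_1 \leq x \leq a_2,\ y \leq b\} : a_1,a_2,b \in \mathbb{R}\}$; horizontal strips: $\mathcal{R}_{\rm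 HS} = \{\{(x,y) : b_1 \leq y \leq b_2\} : b_1,b_2 \in \mathbb{R}\}$. *)

theory Defs
  imports Main "HOL-Analysis.Analysis"
begin

text \<open>A stage on level j is encoded by the chain
  of subsets of roots chosen so far, newest first: [R_j, ..., R_1], where
  R_{i+1} is the set of roots (= indices 0..<m^m) below the chosen subset S'
  of the stage on level i.  Every vertex of a stage is identified by (chain, r)
  where r is the index of its root ancestor; its parent is (tail chain, r).
  The order of a stage is the order of the root indices (the roots are ordered
  by their index; children are ordered as their parents).\<close>

type_synonym hvertex = "nat set list \<times> nat"

fun stage_set :: "nat \<Rightarrow> nat set list \<Rightarrow> nat set" where
  "stage_set m [] = {..<m ^ m}"
| "stage_set m (R # cs) = R"

fun chain_ok :: "nat \<Rightarrow> nat set list \<Rightarrow> bool" where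
  "chain_ok m [] = True"
| "chain_ok m (R # cs) \<longleftrightarrow> chain_ok m cs \<and> length cs + 1 < m
      \<and> R \<subseteq> stage_set m cs \<and> card R = m ^ (m - (length cs + 1))"

definition H_vertices :: "nat \<Rightarrow> hvertex set" where
  "H_vertices m = {(cs, r). chain_ok m cs \<and> r \<in> stage_set m cs}"

definition forest_parent :: "hvertex \<Rightarrow> hvertex" where
  "forest_parent v = (tl (fst v), snd v)"

definition is_leaf :: "nat \<Rightarrow> hvertex \<Rightarrow> bool" where
  "is_leaf m v \<longleftrightarrow> v \<in> H_vertices m \<and>
     \<not> (\<exists>w \<in> H_vertices m. fst w \<noteq> [] \<and> forest_parent w = v)"

definition stage_edges :: "nat \<Rightarrow> hvertex set set" where
  "stage_edges m = {(\<lambda>r. (cs, r)) ` set (take m (drop i (sorted_list_of_set (stage_set m cs))))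
      | cs i. chain_ok m cs \<and> i + m \<le> card (stage_set m cs)}"

definition path_edges :: "nat \<Rightarrow> hvertex set set" where
  "path_edges m = {{(drop k cs, r) | k. k \<le> length cs} | cs r. is_leaf m (cs, r)}"

definition H_edges :: "nat \<Rightarrow> hvertex set set" where
  "H_edges m = stage_edges m \<union> path_edges m"

definition bottomless_rects :: "(real \<times> real) set set" where
  "bottomless_rects = {{(x, y). a1 \<le> x \<and> x \<le> a2 \<and> y \<le> b} | a1 a2 b. True}"

definition horizontal_strips :: "(real \<times> real) set set" where
  "horizontal_strips = {{(x, y). b1 \<le> y \<and> y \<le> b2} | b1 b2. True}"

end

theory Submission
  imports Defs "HOL-Library.Sublist"
begin

text \<open>A vertex is a pair (c, r) of its stage c, a chain of root sets, and its root index r.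
  Fix a strict linear order on root sets and order the chains lexicographically from the
  oldest entry on, once by this order (x-order) and once by its converse (y-order).  A chain
  lies below another in both orders exactly when it is a suffix of it, i.e. when its stage
  lies on the way from the roots to the other one.  Put (c, r) at x = (r, x-rank of c) and
  y = (y-rank of c, r), both read lexicographically.  Then every stage fills its own
  horizontal band, ordered by r inside, so m consecutive vertices of a stage are cut out by
  a horizontal strip; and the root path ending in (L, r) consists of the vertices in the
  x-block of r lying weakly left of and below (L, r), which a bottomless rectangle cuts out.\<close>

lemma mult_add_le_mult_add_iff:
  fixes q q' a b N :: nat
  assumes "a < N" "b < N"
  shows "q * N + a \<le> q' * N + b \<longleftrightarrow> q < q' \<or> q = q' \<and> a \<le> b"
proof
  assume le: "q * N + a \<le> q' * N + b"
  have "(q * N + a) div N \<le> (q' * N + b) div N"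
    using le by (rule div_le_mono)
  then have "q \<le> q'"
    using assms by simp
  then show "q < q' \<or> q = q' \<and> a \<le> b"
    using le by auto
next
  assume "q < q' \<or> q = q' \<and> a \<le> b"
  then show "q * N + a \<le> q' * N + b"
  proof
    assume "q < q'"
    then have "Suc q * N \<le> q' * N" by (rule mult_le_mono1[OF Suc_leI])
    then show ?thesis using assms by simp
  qed simp
qed

lemma strict_prefix_if_lexord_and_lexord_converse:
  assumes "asym r" "(xs, ys) \<in> lexord r" "(xs, ys) \<in> lexord (r\<inverse>)"
  shows "strict_prefix xs ys"
  using assms(2,3)
proof (induction xs arbitrary: ys)
  case Nil
  then show ?case by auto
next
  case (Cons x xs)
  then obtain y ys' where "ys = y # ys'" by (cases ys) auto
  with Cons assms(1) show ?case by (auto dest: asymD)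
qed

lemma prefix_iff_lexord_and_lexord_converse:
  assumes "asym r"
  shows "prefix xs ys \<longleftrightarrow>
    (xs = ys \<or> (xs, ys) \<in> lexord r) \<and> (xs = ys \<or> (xs, ys) \<in> lexord (r\<inverse>))"
proof
  assume "prefix xs ys"
  then show "(xs = ys \<or> (xs, ys) \<in> lexord r) \<and> (xs = ys \<or> (xs, ys) \<in> lexord (r\<inverse>))"
    by (auto simp: prefix_def neq_Nil_conv intro: lexord_append_rightI)
next
  assume "(xs = ys \<or> (xs, ys) \<in> lexord r) \<and> (xs = ys \<or> (xs, ys) \<in> lexord (r\<inverse>))"
  then show "prefix xs ys"
    using strict_prefix_if_lexord_and_lexord_converse[OF assms]
    by (auto simp: strict_prefix_def)
qed

lemma strict_linear_order_rev_lexord: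
  assumes "strict_linear_order r"
  shows "strict_linear_order (inv_image (lexord r) rev)"
  using assms
  unfolding strict_linear_order_on_def
  by (auto simp: lexord_transI trans_inv_image total_inv_image total_lexord
      lexord_irreflexive irrefl_def)

lemma set_take_drop_strict_sorted:
  fixes xs :: "'a::linorder list"
  assumes sorted: "sorted_wrt (<) xs" and "0 < n" "i + n \<le> length xs"
  shows "set (take n (drop i xs)) = {x \<in> set xs. xs ! i \<le> x \<and> x \<le> xs ! (i + n - 1)}"
proof -
  have nth_le_iff: "xs ! j \<le> xs ! k \<longleftrightarrow> j \<le> k" if "j < length xs" "k < length xs" for j k
    using sorted_wrt_nth_less[OF sorted] that by (metis leD le_less linorder_neqE_nat)
  have "take n (drop i xs) = map ((!) xs) [i..<i + n]"
    using assms(3) by (intro nth_equalityI) auto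
  then have "set (take n (drop i xs)) = (!) xs ` {i..<i + n}"
    by simp
  also have "\<dots> = (!) xs ` {j. j < length xs \<and> xs ! i \<le> xs ! j \<and> xs ! j \<le> xs ! (i + n - 1)}"
    using assms(2,3) by (intro arg_cong[where f = "image _"]) (auto simp: nth_le_iff)
  also have "\<dots> = {x \<in> set xs. xs ! i \<le> x \<and> x \<le> xs ! (i + n - 1)}"
    by (auto simp: in_set_conv_nth)
  finally show ?thesis .
qed

lemma suffix_iff_drop: "suffix xs ys \<longleftrightarrow> (\<exists>k \<le> length ys. xs = drop k ys)"
proof
  assume "suffix xs ys"
  then obtain zs where "ys = zs @ xs"
    by (rule suffixE)
  then show "\<exists>k \<le> length ys. xs = drop k ys"
    by (intro exI[of _ "length zs"]) simp
qed (auto simp: suffix_drop)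

lemma image_Int_eq_imageI:
  assumes "E \<subseteq> V" "\<And>v. v \<in> V \<Longrightarrow> f v \<in> R \<longleftrightarrow> v \<in> E"
  shows "f ` V \<inter> R = f ` E"
  using assms by blast

definition rel_rank :: "'a rel \<Rightarrow> 'a set \<Rightarrow> 'a \<Rightarrow> nat" where
  "rel_rank r A a = card {b \<in> A. (b, a) \<in> r}"

lemma rel_rank_less_card:
  assumes "finite A" "a \<in> A" "(a, a) \<notin> r"
  shows "rel_rank r A a < card A"
  unfolding rel_rank_def using assms by (intro psubset_card_mono) auto

lemma rel_rank_le_iff:
  assumes "finite A" "strict_linear_order_on A r" "a \<in> A" "b \<in> A"
  shows "rel_rank r A a \<le> rel_rank r A b \<longleftrightarrow> a = b \<or> (a, b) \<in> r"
proof -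
  have "trans r" "irrefl r" and total: "total_on A r"
    using assms(2) by (simp_all add: strict_linear_order_on_def)
  then have less: "rel_rank r A c < rel_rank r A d" if "c \<in> A" "(c, d) \<in> r" for c d
    unfolding rel_rank_def using assms(1) that
    by (intro psubset_card_mono) (auto simp: irrefl_def dest: transD)
  show ?thesis
  proof
    assume "rel_rank r A a \<le> rel_rank r A b"
    then show "a = b \<or> (a, b) \<in> r"
      using less[of b a] total assms(3,4) by (force simp: total_on_def)
  qed (use less[of a b] assms(3) in auto)
qed

lemma rel_rank_eq_iff:
  assumes "finite A" "strict_linear_order_on A r" "a \<in> A" "b \<in> A"
  shows "rel_rank r A a = rel_rank r A b \<longleftrightarrow> a = b"
proof -
  have "(a, b) \<in> r \<Longrightarrow> (b, a) \<notin> r"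
    using assms(2) by (auto simp: strict_linear_order_on_def irrefl_def dest: transD)
  then show ?thesis
    using rel_rank_le_iff[OF assms] rel_rank_le_iff[OF assms(1,2,4,3)] by auto
qed

lemma chain_ok_drop: "chain_ok m cs \<Longrightarrow> chain_ok m (drop k cs)"
  by (induction cs arbitrary: k) (auto simp: drop_Cons split: nat.split)

lemma stage_set_subset_drop: "chain_ok m cs \<Longrightarrow> stage_set m cs \<subseteq> stage_set m (drop k cs)"
  by (induction cs arbitrary: k) (auto simp: drop_Cons split: nat.split)

lemma stage_set_subset_roots: "chain_ok m cs \<Longrightarrow> stage_set m cs \<subseteq> {..<m ^ m}"
  by (induction cs) auto

lemma finite_chains: "finite {cs. chain_ok m cs}"
proof -
  have "chain_ok m cs \<Longrightarrow> set cs \<subseteq> Pow {..<m ^ m} \<and> length cs \<le> m" for cs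
    by (induction cs) (use stage_set_subset_roots in fastforce)+
  then show ?thesis
    by (blast intro: finite_subset[OF _ finite_lists_length_le[of "Pow {..<m ^ m}" m]])
qed

lemma mem_H_vertices: "(cs, r) \<in> H_vertices m \<longleftrightarrow> chain_ok m cs \<and> r \<in> stage_set m cs"
  by (simp add: H_vertices_def)

locale forest_placement =
  fixes m :: nat and set_less :: "nat set rel"
  assumes strict_linear_order_set_less: "strict_linear_order set_less"
begin

definition x_rank :: "nat set list \<Rightarrow> nat" where
  "x_rank = rel_rank (inv_image (lexord set_less) rev) {cs. chain_ok m cs}"

definition y_rank :: "nat set list \<Rightarrow> nat" where
  "y_rank = rel_rank (inv_image (lexord (set_less\<inverse>)) rev) {cs. chain_ok m cs}"

definition x_coord :: "hvertex \<Rightarrow> nat" where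
  "x_coord v = snd v * card {cs. chain_ok m cs} + x_rank (fst v)"

definition y_coord :: "hvertex \<Rightarrow> nat" where
  "y_coord v = y_rank (fst v) * m ^ m + snd v"

definition place :: "hvertex \<Rightarrow> real \<times> real" where
  "place v = (real (x_coord v), real (y_coord v))"

lemma strict_linear_order_on_chains:
  "strict_linear_order_on {cs. chain_ok m cs} (inv_image (lexord set_less) rev)"
  "strict_linear_order_on {cs. chain_ok m cs} (inv_image (lexord (set_less\<inverse>)) rev)"
  using strict_linear_order_rev_lexord[of set_less] strict_linear_order_rev_lexord[of "set_less\<inverse>"]
    strict_linear_order_set_less
  by (auto simp: strict_linear_order_on_def total_on_def)

lemma x_rank_less_card: "chain_ok m cs \<Longrightarrow> x_rank cs < card {cs. chain_ok m cs}"
  unfolding x_rank_def using finite_chains strict_linear_order_on_chains(1)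
  by (intro rel_rank_less_card) (auto simp: strict_linear_order_on_def irrefl_def)

lemma x_rank_le_iff:
  "chain_ok m c \<Longrightarrow> chain_ok m d \<Longrightarrow>
    x_rank c \<le> x_rank d \<longleftrightarrow> c = d \<or> (rev c, rev d) \<in> lexord set_less"
  unfolding x_rank_def using rel_rank_le_iff[OF finite_chains strict_linear_order_on_chains(1)]
  by simp

lemma y_rank_le_iff:
  "chain_ok m c \<Longrightarrow> chain_ok m d \<Longrightarrow>
    y_rank c \<le> y_rank d \<longleftrightarrow> c = d \<or> (rev c, rev d) \<in> lexord (set_less\<inverse>)"
  unfolding y_rank_def using rel_rank_le_iff[OF finite_chains strict_linear_order_on_chains(2)]
  by simp

lemma y_rank_eq_iff: "chain_ok m c \<Longrightarrow> chain_ok m d \<Longrightarrow> y_rank c = y_rank d \<longleftrightarrow> c = d"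
  unfolding y_rank_def using rel_rank_eq_iff[OF finite_chains strict_linear_order_on_chains(2)]
  by simp

lemma suffix_iff_ranks_le:
  assumes "chain_ok m c" "chain_ok m d"
  shows "suffix c d \<longleftrightarrow> x_rank c \<le> x_rank d \<and> y_rank c \<le> y_rank d"
proof -
  have "asym set_less"
    using strict_linear_order_set_less
    by (auto simp: strict_linear_order_on_def irrefl_def asym_on_def dest: transD)
  then show ?thesis
    using assms by (simp add: suffix_to_prefix prefix_iff_lexord_and_lexord_converse
        x_rank_le_iff y_rank_le_iff)
qed

lemma y_coord_le_iff:
  assumes "(c, r) \<in> H_vertices m" "(d, s) \<in> H_vertices m"
  shows "y_coord (c, r) \<le> y_coord (d, s) \<longleftrightarrow> y_rank c < y_rank d \<or> c = d \<and> r \<le> s"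
proof -
  have "r < m ^ m" "s < m ^ m"
    using assms stage_set_subset_roots by (auto simp: mem_H_vertices)
  then show ?thesis
    using assms y_rank_eq_iff
    by (auto simp: y_coord_def mult_add_le_mult_add_iff mem_H_vertices)
qed

lemma inj_on_place: "inj_on place (H_vertices m)"
proof
  fix v w assume v: "v \<in> H_vertices m" and w: "w \<in> H_vertices m" and "place v = place w"
  then have "y_coord v \<le> y_coord w" "y_coord w \<le> y_coord v"
    by (simp_all add: place_def)
  moreover obtain c r d s where "v = (c, r)" "w = (d, s)"
    by fastforce
  ultimately show "v = w"
    using y_coord_le_iff[of c r d s] y_coord_le_iff[of d s c r] v w by auto
qed

lemma path_cut_by_bottomless_rect:
  assumes L: "(L, r) \<in> H_vertices m"
  shows "\<exists>R \<in> bottomless_rects.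
    place ` H_vertices m \<inter> R = place ` {(drop k L, r) | k. k \<le> length L}"
proof -
  let ?K = "card {cs. chain_ok m cs}"
  define R where "R = {(x, y). real (r * ?K) \<le> x \<and> x \<le> real (x_coord (L, r))
      \<and> y \<le> real (y_coord (L, r))}"
  have "R \<in> bottomless_rects"
    unfolding R_def bottomless_rects_def by blast
  moreover have "place ` H_vertices m \<inter> R = place ` {(drop k L, r) | k. k \<le> length L}"
  proof (rule image_Int_eq_imageI)
    show "{(drop k L, r) | k. k \<le> length L} \<subseteq> H_vertices m"
      using L chain_ok_drop stage_set_subset_drop by (fastforce simp: mem_H_vertices)
  next
    fix v assume v: "v \<in> H_vertices m"
    then obtain c s where c: "v = (c, s)" "chain_ok m c" "s \<in> stage_set m c"
      by (cases v) (auto simp: mem_H_vertices)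
    have bounds: "x_rank c < ?K" "x_rank L < ?K"
      using L c x_rank_less_card by (auto simp: mem_H_vertices)
    have left: "r * ?K \<le> x_coord v \<longleftrightarrow> r \<le> s"
      using mult_add_le_mult_add_iff[of 0 ?K "x_rank c" r s] bounds
      by (auto simp: x_coord_def c(1))
    have right: "x_coord v \<le> x_coord (L, r) \<longleftrightarrow> s < r \<or> s = r \<and> x_rank c \<le> x_rank L"
      using bounds by (simp add: x_coord_def c(1) mult_add_le_mult_add_iff)
    have "place v \<in> R \<longleftrightarrow>
        r * ?K \<le> x_coord v \<and> x_coord v \<le> x_coord (L, r) \<and> y_coord v \<le> y_coord (L, r)"
      by (simp add: R_def place_def del: of_nat_mult)
    also have "\<dots> \<longleftrightarrow> s = r \<and> x_rank c \<le> x_rank L \<and> y_rank c \<le> y_rank L"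
      using left right y_coord_le_iff[OF v[unfolded c(1)] L] y_rank_eq_iff[of c L] L c
      by (auto simp: c(1) mem_H_vertices)
    also have "\<dots> \<longleftrightarrow> s = r \<and> suffix c L"
      using suffix_iff_ranks_le[OF c(2)] L by (simp add: mem_H_vertices)
    also have "\<dots> \<longleftrightarrow> v \<in> {(drop k L, r) | k. k \<le> length L}"
      using suffix_iff_drop[of c L] c(1) by auto
    finally show "place v \<in> R \<longleftrightarrow> v \<in> {(drop k L, r) | k. k \<le> length L}" .
  qed
  ultimately show ?thesis by blast
qed

lemma stage_edge_cut_by_strip:
  assumes "0 < m" "E \<in> stage_edges m"
  shows "\<exists>R \<in> horizontal_strips. place ` H_vertices m \<inter> R = place ` E"
proof -
  obtain cs i where cs: "chain_ok m cs" and i: "i + m \<le> card (stage_set m cs)"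
    and E: "E = (\<lambda>r. (cs, r)) ` set (take m (drop i (sorted_list_of_set (stage_set m cs))))"
    using assms(2) unfolding stage_edges_def by blast
  define xs where "xs = sorted_list_of_set (stage_set m cs)"
  define a b where "a = xs ! i" and "b = xs ! (i + m - 1)"
  have "finite (stage_set m cs)"
    using cs stage_set_subset_roots finite_subset by blast
  then have xs: "set xs = stage_set m cs" "length xs = card (stage_set m cs)" "sorted_wrt (<) xs"
    by (simp_all add: xs_def)
  then have interval: "set (take m (drop i xs)) = {s \<in> stage_set m cs. a \<le> s \<and> s \<le> b}"
    using set_take_drop_strict_sorted[of xs m i] assms(1) i by (simp add: a_def b_def)
  have "i < length xs" "i + m - 1 < length xs"
    using xs(2) i assms(1) by linarith+
  then have ab: "a \<in> stage_set m cs" "b \<in> stage_set m cs"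
    using xs(1) nth_mem unfolding a_def b_def by blast+
  define R where "R = {(x :: real, y). real (y_coord (cs, a)) \<le> y \<and> y \<le> real (y_coord (cs, b))}"
  have "R \<in> horizontal_strips"
    unfolding R_def horizontal_strips_def by blast
  moreover have "place ` H_vertices m \<inter> R = place ` E"
  proof (rule image_Int_eq_imageI)
    show "E \<subseteq> H_vertices m"
      using cs interval by (auto simp: E xs_def[symmetric] mem_H_vertices)
  next
    fix v assume v: "v \<in> H_vertices m"
    then obtain c s where c: "v = (c, s)"
      by fastforce
    have "place v \<in> R \<longleftrightarrow> y_coord (cs, a) \<le> y_coord (c, s) \<and> y_coord (c, s) \<le> y_coord (cs, b)"
      by (simp add: R_def place_def c)
    also have "\<dots> \<longleftrightarrow> c = cs \<and> a \<le> s \<and> s \<le> b"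
      using y_coord_le_iff[of cs a c s] y_coord_le_iff[of c s cs b] v cs ab
      by (auto simp: c mem_H_vertices)
    also have "\<dots> \<longleftrightarrow> v \<in> E"
      using v interval by (auto simp: c E xs_def[symmetric] mem_H_vertices)
    finally show "place v \<in> R \<longleftrightarrow> v \<in> E" .
  qed
  ultimately show ?thesis by blast
qed

lemma H_edge_cut_by_range:
  assumes "0 < m" "E \<in> H_edges m"
  shows "\<exists>R \<in> bottomless_rects \<union> horizontal_strips. place ` H_vertices m \<inter> R = place ` E"
proof -
  consider "E \<in> stage_edges m"
    | L r where "E = {(drop k L, r) | k. k \<le> length L}" "(L, r) \<in> H_vertices m"
    using assms(2) unfolding H_edges_def path_edges_def is_leaf_def by blast
  then show ?thesis
  proof cases
    case 1
    then show ?thesis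
      using stage_edge_cut_by_strip[OF assms(1)] by blast
  next
    case 2
    then show ?thesis
      using path_cut_by_bottomless_rect by blast
  qed
qed

end

theorem theorem10:
  fixes m :: nat
  assumes "m \<ge> 1"
  shows "\<exists>\<pi> :: hvertex \<Rightarrow> real \<times> real. inj_on \<pi> (H_vertices m) \<and>
           (\<forall>E \<in> H_edges m. \<exists>R \<in> bottomless_rects \<union> horizontal_strips.
               \<pi> ` H_vertices m \<inter> R = \<pi> ` E)"
proof -
  obtain wo :: "nat set rel" where "Well_order wo \<and> Field wo = UNIV"
    using well_ordering ..
  then have "strict_linear_order (wo - Id)"
    by (metis strict_linear_order_on_diff_Id well_order_on_def)
  then interpret forest_placement m "wo - Id"
    by unfold_locales
  have "0 < m"
    using assms by simp
  then show ?thesis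
    using inj_on_place H_edge_cut_by_range by blast
qed

end
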